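(* Let $\mathcal H$ be a separable complex Hilbert space, $A\in L(\mathcal H)^+$ and $\mathcal S$ a closed subspace of $\mathcal H$. The pair $(A,\mathcal S)$ is compatible if and only if there exists an $A$-projection into $\mathcal S$.
   Context: $(A,\mathcal S)$ is compatible if there exists $Q\in L(\mathcal H)$ with $Q^2=Q$, $R(Q)=\mathcal S$ and $AQ=Q^*A$. With $\|z\|_A=\langle Az,z\rangle^{1/2}$, an $A$-projection into $\mathcal S$ is an operator $T\in L(\mathcal H)$ with $R(T)\subseteq\mathcal S$ and $\|y-Ty\|_A\le\|y-s\|_A$ for all $y\in\mathcal H$, $s\in\mathcal S$. *)

theory Defs
  imports "HOL-Analysis.Analysis"
begin

text \<open>HOL-Analysis has no complex vector spaces / complex inner product spaces,
so we introduce them here as type classes (convention: the inner product is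
conjugate-linear in the first argument and linear in the second).\<close>

class complex_vector = real_vector +
  fixes scaleC :: "complex \<Rightarrow> 'a \<Rightarrow> 'a" (infixr "*\<^sub>C" 75)
  assumes scaleC_add_right: "a *\<^sub>C (x + y) = a *\<^sub>C x + a *\<^sub>C y"
    and scaleC_add_left: "(a + b) *\<^sub>C x = a *\<^sub>C x + b *\<^sub>C x"
    and scaleC_scaleC: "a *\<^sub>C (b *\<^sub>C x) = (a * b) *\<^sub>C x"
    and scaleC_one: "1 *\<^sub>C x = x"
    and scaleR_scaleC: "scaleR r x = complex_of_real r *\<^sub>C x"

class complex_inner = complex_vector + real_normed_vector +
  fixes cinner :: "'a \<Rightarrow> 'a \<Rightarrow> complex"
  assumes cinner_commute: "cinner x y = cnj (cinner y x)"
    and cinner_add_left: "cinner (x + y) z = cinner x z + cinner y z"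
    and cinner_scaleC_left: "cinner (c *\<^sub>C x) y = cnj c * cinner x y"
    and cinner_self_real: "Im (cinner x x) = 0"
    and cinner_self_nonneg: "0 \<le> Re (cinner x x)"
    and cinner_self_eq_zero: "cinner x x = 0 \<longleftrightarrow> x = 0"
    and norm_eq_sqrt_cinner: "norm x = sqrt (Re (cinner x x))"

text \<open>A complex Hilbert space is a type of class complex_inner + complete_space.\<close>

definition clinear :: "('a::complex_vector \<Rightarrow> 'b::complex_vector) \<Rightarrow> bool" where
  "clinear T \<longleftrightarrow> (\<forall>x y. T (x + y) = T x + T y) \<and> (\<forall>c x. T (c *\<^sub>C x) = c *\<^sub>C T x)"

definition bounded_clinear :: "('a::complex_inner \<Rightarrow> 'b::complex_inner) \<Rightarrow> bool" where
  "bounded_clinear T \<longleftrightarrow> clinear T \<and> (\<exists>K. \<forall>x. norm (T x) \<le> norm x * K)"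

definition cadjoint :: "('a::complex_inner \<Rightarrow> 'a) \<Rightarrow> ('a \<Rightarrow> 'a)" where
  "cadjoint T = (SOME T'. \<forall>x y. cinner (T x) y = cinner x (T' y))"

definition positive_op :: "('a::complex_inner \<Rightarrow> 'a) \<Rightarrow> bool" where
  "positive_op A \<longleftrightarrow> bounded_clinear A \<and>
     (\<forall>x. Im (cinner (A x) x) = 0 \<and> 0 \<le> Re (cinner (A x) x))"

definition csubspace :: "'a::complex_vector set \<Rightarrow> bool" where
  "csubspace S \<longleftrightarrow> 0 \<in> S \<and> (\<forall>x\<in>S. \<forall>y\<in>S. x + y \<in> S) \<and> (\<forall>c. \<forall>x\<in>S. c *\<^sub>C x \<in> S)"

definition closed_csubspace :: "'a::complex_inner set \<Rightarrow> bool" where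
  "closed_csubspace S \<longleftrightarrow> csubspace S \<and> closed S"

definition A_norm :: "('a::complex_inner \<Rightarrow> 'a) \<Rightarrow> 'a \<Rightarrow> real" where
  "A_norm A z = sqrt (Re (cinner (A z) z))"

definition compatible :: "('a::complex_inner \<Rightarrow> 'a) \<Rightarrow> 'a set \<Rightarrow> bool" where
  "compatible A S \<longleftrightarrow> (\<exists>Q. bounded_clinear Q \<and> Q \<circ> Q = Q \<and> range Q = S \<and>
                                A \<circ> Q = cadjoint Q \<circ> A)"

definition A_projection :: "('a::complex_inner \<Rightarrow> 'a) \<Rightarrow> 'a set \<Rightarrow> ('a \<Rightarrow> 'a) \<Rightarrow> bool" where
  "A_projection A S T \<longleftrightarrow> bounded_clinear T \<and> range T \<subseteq> S \<and>
     (\<forall>y. \<forall>s\<in>S. A_norm A (y - T y) \<le> A_norm A (y - s))"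

end

theory Submission
  imports Defs
begin

text \<open>If \<open>Q\<close> is a bounded projection onto \<open>S\<close> with \<open>AQ = Q\<^sup>*A\<close>, then \<open>y - Qy\<close> is
\<open>A\<close>-orthogonal to \<open>S\<close>, so by Pythagoras for the semi-inner product \<open>\<langle>A\<cdot>,\<cdot>\<rangle>\<close> the map
\<open>Q\<close> is an \<open>A\<close>-projection. Conversely, an \<open>A\<close>-projection \<open>T\<close> satisfies the variational
condition \<open>\<langle>A(y - Ty), s\<rangle> = 0\<close> for \<open>s \<in> S\<close>, but need not be idempotent. Correct it by
\<open>Q = T + P (I - T)\<close>, where \<open>P\<close> is the orthogonal projection onto the closed subspace
\<open>N = S \<inter> (AS)\<^sup>\<perp>\<close>: then \<open>Q\<close> is a bounded projection onto \<open>S\<close> whose kernel is still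
\<open>A\<close>-orthogonal to \<open>S\<close>, and this is equivalent to \<open>AQ = Q\<^sup>*A\<close>.\<close>

subsection \<open>Complex inner product spaces\<close>

lemma minus_eq_scaleC: "- (x::'a::complex_vector) = (-1) *\<^sub>C x"
proof -
  have "- x = (-1::real) *\<^sub>R x" by simp
  also have "\<dots> = complex_of_real (-1) *\<^sub>C x" by (rule scaleR_scaleC)
  finally show ?thesis by simp
qed

lemma scaleC_minus_left: "(- c) *\<^sub>C (x::'a::complex_vector) = - (c *\<^sub>C x)"
  by (simp only: minus_eq_scaleC[of "c *\<^sub>C x"] scaleC_scaleC) simp

lemma scaleC_diff_right: "c *\<^sub>C (x - y::'a::complex_vector) = c *\<^sub>C x - c *\<^sub>C y"
proof -
  have "c *\<^sub>C (x - y) = c *\<^sub>C x + c *\<^sub>C ((-1) *\<^sub>C y)"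
    by (simp only: diff_conv_add_uminus scaleC_add_right minus_eq_scaleC[of y])
  also have "c *\<^sub>C ((-1) *\<^sub>C y) = (-1) *\<^sub>C (c *\<^sub>C y)"
    by (simp only: scaleC_scaleC mult.commute)
  finally show ?thesis by (simp only: diff_conv_add_uminus minus_eq_scaleC[of "c *\<^sub>C y"])
qed

lemma cinner_zero_left [simp]: "cinner 0 (y::'a::complex_inner) = 0"
  using cinner_add_left[of 0 0 y] by simp

lemma cinner_zero_right [simp]: "cinner (x::'a::complex_inner) 0 = 0"
  using cinner_commute[of x 0] by simp

lemma cinner_add_right: "cinner (x::'a::complex_inner) (y + z) = cinner x y + cinner x z"
  using cinner_commute[of x "y + z"] cinner_commute[of y x] cinner_commute[of z x]
  by (simp add: cinner_add_left)

lemma cinner_scaleC_right: "cinner (x::'a::complex_inner) (c *\<^sub>C y) = c * cinner x y"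
  using cinner_commute[of x "c *\<^sub>C y"] cinner_commute[of y x] by (simp add: cinner_scaleC_left)

lemma cinner_minus_left: "cinner (- x) (y::'a::complex_inner) = - cinner x y"
  by (simp only: minus_eq_scaleC[of x] cinner_scaleC_left) simp

lemma cinner_minus_right: "cinner x (- y::'a::complex_inner) = - cinner x y"
  by (simp only: minus_eq_scaleC[of y] cinner_scaleC_right) simp

lemma cinner_diff_left: "cinner (x - y) (z::'a::complex_inner) = cinner x z - cinner y z"
  by (simp only: diff_conv_add_uminus cinner_add_left cinner_minus_left)

lemma cinner_diff_right: "cinner x (y - z::'a::complex_inner) = cinner x y - cinner x z"
  by (simp only: diff_conv_add_uminus cinner_add_right cinner_minus_right)

lemma cinner_self: "cinner x (x::'a::complex_inner) = complex_of_real ((norm x)\<^sup>2)"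
proof -
  have "(norm x)\<^sup>2 = Re (cinner x x)"
    using norm_eq_sqrt_cinner[of x] cinner_self_nonneg[of x] by (metis real_sqrt_pow2)
  then show ?thesis
    using cinner_self_real[of x] by (intro complex_eqI) simp_all
qed

lemma power2_norm_eq_cinner: "(norm x)\<^sup>2 = Re (cinner x (x::'a::complex_inner))"
  by (simp add: cinner_self)

lemma cinner_right_eqI:
  assumes "\<And>x. cinner x a = cinner x (b::'a::complex_inner)"
  shows "a = b"
proof -
  have "cinner (a - b) (a - b) = 0"
    using assms[of "a - b"] by (simp add: cinner_diff_right)
  then show ?thesis by (simp add: cinner_self_eq_zero)
qed

lemma power2_norm_add:
  "(norm (x + y))\<^sup>2 = (norm x)\<^sup>2 + (norm (y::'a::complex_inner))\<^sup>2 + 2 * Re (cinner x y)"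
proof -
  have "cinner (x + y) (x + y) = cinner x x + cinner y y + cinner x y + cinner y x"
    by (simp add: cinner_add_left cinner_add_right)
  moreover have "Re (cinner y x) = Re (cinner x y)"
    using cinner_commute[of y x] by simp
  ultimately show ?thesis
    by (simp add: power2_norm_eq_cinner)
qed

lemma power2_norm_diff:
  "(norm (x - y))\<^sup>2 = (norm x)\<^sup>2 + (norm (y::'a::complex_inner))\<^sup>2 - 2 * Re (cinner x y)"
  using power2_norm_add[of x "- y"] by (simp add: cinner_minus_right)

lemma parallelogram_law:
  "(norm (a - b))\<^sup>2 = 2 * (norm a)\<^sup>2 + 2 * (norm (b::'a::complex_inner))\<^sup>2 - (norm (a + b))\<^sup>2"
  using power2_norm_add[of a b] power2_norm_diff[of a b] by simp

lemma norm_scaleC: "norm (c *\<^sub>C (x::'a::complex_inner)) = cmod c * norm x"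
proof -
  have "cinner (c *\<^sub>C x) (c *\<^sub>C x) = (cnj c * c) * cinner x x"
    by (simp add: cinner_scaleC_left cinner_scaleC_right)
  also have "cnj c * c = complex_of_real ((cmod c)\<^sup>2)"
    using complex_norm_square[of c] by (simp add: mult.commute)
  finally have "(norm (c *\<^sub>C x))\<^sup>2 = (cmod c * norm x)\<^sup>2"
    by (simp only: cinner_self power_mult_distrib of_real_mult[symmetric] of_real_eq_iff)
  then show ?thesis by (simp add: power2_eq_iff_nonneg)
qed

lemma Cauchy_Schwarz_cinner: "cmod (cinner x y) \<le> norm x * norm (y::'a::complex_inner)"
proof (cases "y = 0")
  case False
  define a where "a = cinner x y"
  define n where "n = (norm y)\<^sup>2"
  have n: "n > 0" using False by (simp add: n_def)
  define c where "c = cnj a / complex_of_real n"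
  \<comment> \<open>\<open>x - c y\<close> is the component of \<open>x\<close> orthogonal to \<open>y\<close>\<close>
  have "0 \<le> (norm (x - c *\<^sub>C y))\<^sup>2" by simp
  also have "\<dots> = (norm x)\<^sup>2 + (cmod c)\<^sup>2 * n - 2 * Re (c * a)"
    by (simp add: power2_norm_diff norm_scaleC cinner_scaleC_right power_mult_distrib a_def n_def)
  also have "c * a = complex_of_real ((cmod a)\<^sup>2 / n)"
    using n by (simp add: c_def complex_norm_square[symmetric] mult.commute)
  also have "(cmod c)\<^sup>2 * n = (cmod a)\<^sup>2 / n"
    using n by (simp add: c_def norm_divide power2_eq_square)
  finally have "(cmod a)\<^sup>2 \<le> (norm x * norm y)\<^sup>2"
    using n by (simp add: n_def divide_le_eq power_mult_distrib)
  then show ?thesis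
    unfolding a_def by (meson mult_nonneg_nonneg norm_ge_zero power2_le_imp_le)
qed simp

lemma continuous_on_cinner_right: "continuous_on UNIV (cinner (a::'a::complex_inner))"
proof (rule lipschitz_on_continuous_on)
  show "(norm a)-lipschitz_on UNIV (cinner a)"
  proof (rule lipschitz_onI)
    fix x y :: 'a
    have "dist (cinner a x) (cinner a y) = cmod (cinner a (x - y))"
      by (simp add: dist_norm cinner_diff_right)
    also have "\<dots> \<le> norm a * dist x y"
      using Cauchy_Schwarz_cinner by (simp add: dist_norm)
    finally show "dist (cinner a x) (cinner a y) \<le> norm a * dist x y" .
  qed simp
qed

lemma closed_orthogonal: "closed {x. cinner (a::'a::complex_inner) x = 0}"
  by (rule closed_Collect_eq[OF continuous_on_cinner_right continuous_on_const])

lemma hermitian_form_min_orthogonal: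
  fixes F :: "'a::complex_vector \<Rightarrow> 'a \<Rightarrow> complex"
  assumes sym: "\<And>x y. F x y = cnj (F y x)"
    and add_right: "\<And>x y z. F x (y + z) = F x y + F x z"
    and scaleC_right: "\<And>x c y. F x (c *\<^sub>C y) = c * F x y"
    and pos: "\<And>x. 0 \<le> Re (F x x)"
    and minimal: "\<And>c. Re (F u u) \<le> Re (F (u - c *\<^sub>C s) (u - c *\<^sub>C s))"
  shows "F u s = 0"
proof -
  have add_left: "F (x + y) z = F x z + F y z" for x y z
    using sym[of "x + y" z] sym[of z x] sym[of z y] add_right[of z x y] by simp
  have scaleC_left: "F (c *\<^sub>C x) y = cnj c * F x y" for c x y
    using sym[of "c *\<^sub>C x" y] sym[of y x] scaleC_right[of y c x] by simp
  define a where "a = F u s"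
  define b where "b = Re (F s s)"
  define k where "k = (cmod a)\<^sup>2"
  define t :: real where "t = 1 / (b + 1)"
  have "0 \<le> b" using pos by (simp add: b_def)
  then have t: "0 < t" "t * b < 1" by (simp_all add: t_def)
  \<comment> \<open>moving to \<open>u - t cnj(a) s\<close> changes \<open>F\<close> by \<open>t |a|\<^sup>2 (t b - 2) < 0\<close> unless \<open>a = 0\<close>\<close>
  define d where "d = - (complex_of_real t * cnj a)"
  have ak: "a * cnj a = complex_of_real k"
    using complex_norm_square[of a] by (simp add: k_def)
  have da: "d * a = - complex_of_real (t * k)"
    by (simp add: d_def ak[symmetric] mult.commute mult.left_commute)
  have dd: "cnj d * d = complex_of_real (t\<^sup>2 * k)"
    by (simp add: d_def ak[symmetric] power2_eq_square mult.commute mult.left_commute)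
  have "F (u + d *\<^sub>C s) (u + d *\<^sub>C s) = F u u + d * a + cnj (d * a) + (cnj d * d) * F s s"
    by (simp add: add_left add_right scaleC_left scaleC_right a_def sym[of s u] algebra_simps)
  then have "Re (F (u + d *\<^sub>C s) (u + d *\<^sub>C s)) = Re (F u u) - 2 * t * k + t\<^sup>2 * k * b"
    unfolding da dd by (simp add: b_def)
  moreover have "u + d *\<^sub>C s = u - (complex_of_real t * cnj a) *\<^sub>C s"
    by (simp add: d_def scaleC_minus_left)
  ultimately have "0 \<le> k * (t * (t * b - 2))"
    using minimal[of "complex_of_real t * cnj a"] by (simp add: algebra_simps power2_eq_square)
  moreover have "t * (t * b - 2) < 0" using t by (simp add: mult_pos_neg)
  moreover have "0 \<le> k" by (simp add: k_def)
  ultimately have "k = 0" by (smt (verit) mult_pos_neg)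
  then show ?thesis by (simp add: k_def a_def)
qed

subsection \<open>Subspaces and operators\<close>

lemma csubspace_zero: "csubspace S \<Longrightarrow> 0 \<in> S"
  by (simp add: csubspace_def)

lemma csubspace_add: "csubspace S \<Longrightarrow> x \<in> S \<Longrightarrow> y \<in> S \<Longrightarrow> x + y \<in> S"
  by (simp add: csubspace_def)

lemma csubspace_scaleC: "csubspace S \<Longrightarrow> x \<in> S \<Longrightarrow> c *\<^sub>C x \<in> S"
  by (simp add: csubspace_def)

lemma csubspace_scaleR: "csubspace S \<Longrightarrow> x \<in> S \<Longrightarrow> r *\<^sub>R x \<in> S"
  by (simp add: csubspace_scaleC scaleR_scaleC)

lemma csubspace_diff: "csubspace S \<Longrightarrow> x \<in> S \<Longrightarrow> y \<in> S \<Longrightarrow> x - y \<in> S"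
  by (metis csubspace_add csubspace_scaleC diff_conv_add_uminus minus_eq_scaleC)

lemma clinear_add: "clinear T \<Longrightarrow> T (x + y) = T x + T y"
  by (simp add: clinear_def)

lemma clinear_scaleC: "clinear T \<Longrightarrow> T (c *\<^sub>C x) = c *\<^sub>C T x"
  by (simp add: clinear_def)

lemma clinear_zero: "clinear T \<Longrightarrow> T 0 = 0"
  using clinear_add[of T 0 0] by simp

lemma clinear_diff: "clinear T \<Longrightarrow> T (x - y) = T x - T y"
  by (simp only: diff_conv_add_uminus minus_eq_scaleC clinear_add clinear_scaleC)

lemma bounded_clinear_ident: "bounded_clinear (\<lambda>x. x)"
  unfolding bounded_clinear_def clinear_def by (auto intro: exI[of _ 1])

lemma bounded_clinear_add:
  assumes "bounded_clinear S" "bounded_clinear T"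
  shows "bounded_clinear (\<lambda>x. S x + T x)"
proof -
  obtain K L where K: "\<And>x. norm (S x) \<le> norm x * K" and L: "\<And>x. norm (T x) \<le> norm x * L"
    using assms unfolding bounded_clinear_def by blast
  have "norm (S x + T x) \<le> norm x * (K + L)" for x
    using norm_triangle_ineq[of "S x" "T x"] K[of x] L[of x] by (simp add: distrib_left)
  then show ?thesis
    using assms unfolding bounded_clinear_def clinear_def by (auto simp: scaleC_add_right)
qed

lemma bounded_clinear_diff:
  assumes "bounded_clinear S" "bounded_clinear T"
  shows "bounded_clinear (\<lambda>x. S x - T x)"
proof -
  have "bounded_clinear (\<lambda>x. (-1) *\<^sub>C T x)"
    using assms(2) unfolding bounded_clinear_def clinear_def
    by (auto simp: scaleC_add_right scaleC_scaleC mult.commute norm_scaleC)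
  from bounded_clinear_add[OF assms(1) this] show ?thesis
    by (simp add: minus_eq_scaleC[symmetric])
qed

lemma bounded_clinear_compose:
  assumes "bounded_clinear S" "bounded_clinear T"
  shows "bounded_clinear (\<lambda>x. S (T x))"
proof -
  obtain K L where K: "\<And>x. norm (S x) \<le> norm x * K" and L: "\<And>x. norm (T x) \<le> norm x * L"
    using assms unfolding bounded_clinear_def by blast
  have "norm (S (T x)) \<le> norm x * (L * max K 0)" for x
  proof -
    have "norm (S (T x)) \<le> norm (T x) * max K 0"
      using K[of "T x"] by (smt (verit) mult_left_mono norm_ge_zero)
    also have "\<dots> \<le> norm x * L * max K 0"
      using L[of x] by (simp add: mult_right_mono)
    finally show ?thesis by (simp add: mult.assoc)
  qed
  then show ?thesis
    using assms unfolding bounded_clinear_def clinear_def by auto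
qed

subsection \<open>Orthogonal projections\<close>

lemma midpoint_distance_bound:
  fixes x a b :: "'a::complex_inner"
  assumes "d \<le> norm (x - (1/2::real) *\<^sub>R (a + b))" and "0 \<le> d"
  shows "(norm (a - b))\<^sup>2 \<le> 2 * (norm (x - a))\<^sup>2 + 2 * (norm (x - b))\<^sup>2 - 4 * d\<^sup>2"
proof -
  have "(x - b) + (x - a) = 2 *\<^sub>R (x - (1/2::real) *\<^sub>R (a + b))"
    by (simp add: scaleR_diff_right scaleR_add_right scaleR_2)
  then have "(norm (a - b))\<^sup>2
      = 2 * (norm (x - b))\<^sup>2 + 2 * (norm (x - a))\<^sup>2 - 4 * (norm (x - (1/2::real) *\<^sub>R (a + b)))\<^sup>2"
    using parallelogram_law[of "x - b" "x - a"] by (simp add: power2_eq_square)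
  moreover have "d\<^sup>2 \<le> (norm (x - (1/2::real) *\<^sub>R (a + b)))\<^sup>2"
    using assms by (simp add: power_mono)
  ultimately show ?thesis by linarith
qed

lemma minimizing_sequence_Cauchy:
  fixes f :: "nat \<Rightarrow> 'a::complex_inner"
  assumes sub: "csubspace N" and fN: "\<And>k. f k \<in> N"
    and d_le: "\<And>n. n \<in> N \<Longrightarrow> d \<le> norm (x - n)" and "0 \<le> d"
    and lim: "(\<lambda>k. norm (x - f k)) \<longlonglongrightarrow> d"
  shows "Cauchy f"
proof (rule metric_CauchyI)
  fix r :: real
  assume r: "0 < r"
  define g where "g k = 2 * (norm (x - f k))\<^sup>2 - 2 * d\<^sup>2" for k
  have "g \<longlonglongrightarrow> 2 * d\<^sup>2 - 2 * d\<^sup>2"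
    unfolding g_def by (intro tendsto_intros lim)
  moreover have "0 < r\<^sup>2 / 2" using r by simp
  ultimately obtain M where "\<forall>n\<ge>M. norm (g n - 0) < r\<^sup>2 / 2"
    by (metis LIMSEQ_D diff_self)
  then have M: "\<bar>g n\<bar> < r\<^sup>2 / 2" if "n \<ge> M" for n
    using that by simp
  have "dist (f m) (f n) < r" if "m \<ge> M" "n \<ge> M" for m n
  proof -
    have "(1/2::real) *\<^sub>R (f m + f n) \<in> N"
      by (intro csubspace_scaleR csubspace_add sub fN)
    then have "(norm (f m - f n))\<^sup>2 \<le> g m + g n"
      using midpoint_distance_bound[OF d_le \<open>0 \<le> d\<close>] by (simp add: g_def)
    also have "\<dots> < r\<^sup>2" using M[OF that(1)] M[OF that(2)] by linarith
    finally show ?thesis using r by (simp add: dist_norm power_less_imp_less_base)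
  qed
  then show "\<exists>M. \<forall>m\<ge>M. \<forall>n\<ge>M. dist (f m) (f n) < r" by blast
qed

lemma closest_point_exists:
  fixes N :: "'a::{complex_inner,complete_space} set"
  assumes sub: "csubspace N" and cl: "closed N"
  shows "\<exists>p\<in>N. \<forall>n\<in>N. norm (x - p) \<le> norm (x - n)"
proof -
  define d where "d = infdist x N"
  define e where "e k = d + inverse (real (Suc k))" for k
  have d0: "0 \<le> d" by (simp add: d_def infdist_nonneg)
  have d_le: "d \<le> norm (x - n)" if "n \<in> N" for n
    using infdist_le[OF that, of x] by (simp add: d_def dist_norm)
  have "\<exists>n\<in>N. norm (x - n) < e k" for k
  proof -
    have "N \<noteq> {}" using csubspace_zero[OF sub] by auto
    moreover have "infdist x N < e k" by (simp add: d_def e_def)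
    ultimately show ?thesis
      using cInf_lessD[of "dist x ` N"] by (auto simp: infdist_notempty dist_norm)
  qed
  then obtain f where fN: "\<And>k. f k \<in> N" and fe: "\<And>k. norm (x - f k) < e k"
    by metis
  have "e \<longlonglongrightarrow> d + 0"
    unfolding e_def by (intro tendsto_intros LIMSEQ_inverse_real_of_nat)
  then have e_lim: "e \<longlonglongrightarrow> d" by simp
  have lim: "(\<lambda>k. norm (x - f k)) \<longlonglongrightarrow> d"
  proof (rule tendsto_sandwich[of "\<lambda>_. d" _ _ e])
    show "\<forall>\<^sub>F k in sequentially. d \<le> norm (x - f k)"
      using d_le[OF fN] by (intro always_eventually allI)
    show "\<forall>\<^sub>F k in sequentially. norm (x - f k) \<le> e k"
      using fe by (intro always_eventually allI less_imp_le)
  qed (simp_all add: e_lim)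
  then obtain p where f_lim: "f \<longlonglongrightarrow> p"
    using Cauchy_convergent[OF minimizing_sequence_Cauchy[OF sub fN d_le d0 lim]]
    unfolding convergent_def by blast
  have "norm (x - p) = d"
    using LIMSEQ_unique[OF tendsto_norm[OF tendsto_diff[OF tendsto_const f_lim]] lim] .
  moreover have "p \<in> N" by (rule closed_sequentially[OF cl fN f_lim])
  ultimately show ?thesis using d_le by force
qed

lemma orthogonal_decomposition_exists:
  fixes N :: "'a::{complex_inner,complete_space} set"
  assumes sub: "csubspace N" and cl: "closed N"
  shows "\<exists>p\<in>N. \<forall>n\<in>N. cinner (x - p) n = 0"
proof -
  obtain p where pN: "p \<in> N" and p_min: "\<And>n. n \<in> N \<Longrightarrow> norm (x - p) \<le> norm (x - n)"
    using closest_point_exists[OF sub cl] by blast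
  have "cinner (x - p) n = 0" if nN: "n \<in> N" for n
  proof (rule hermitian_form_min_orthogonal[where F = cinner])
    fix c
    have "p + c *\<^sub>C n \<in> N" by (intro csubspace_add csubspace_scaleC sub pN nN)
    then have "norm (x - p) \<le> norm ((x - p) - c *\<^sub>C n)"
      using p_min by (simp add: diff_diff_eq)
    then show "Re (cinner (x - p) (x - p)) \<le> Re (cinner (x - p - c *\<^sub>C n) (x - p - c *\<^sub>C n))"
      by (simp add: power2_norm_eq_cinner[symmetric] power_mono)
  qed (use cinner_commute cinner_add_right cinner_scaleC_right cinner_self_nonneg in blast)+
  with pN show ?thesis by blast
qed

definition orth_proj :: "'a::complex_inner set \<Rightarrow> 'a \<Rightarrow> 'a" where
  "orth_proj N x = (SOME p. p \<in> N \<and> (\<forall>n\<in>N. cinner (x - p) n = 0))"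

context
  fixes N :: "'a::{complex_inner,complete_space} set"
  assumes sub: "csubspace N" and cl: "closed N"
begin

lemma orth_proj_in: "orth_proj N x \<in> N"
  and orth_proj_orthogonal: "n \<in> N \<Longrightarrow> cinner (x - orth_proj N x) n = 0"
proof -
  have "\<exists>p. p \<in> N \<and> (\<forall>n\<in>N. cinner (x - p) n = 0)"
    using orthogonal_decomposition_exists[OF sub cl] by blast
  from someI_ex[OF this] show "orth_proj N x \<in> N" "n \<in> N \<Longrightarrow> cinner (x - orth_proj N x) n = 0"
    unfolding orth_proj_def by blast+
qed

lemma orth_proj_unique:
  assumes pN: "p \<in> N" and p_orth: "\<And>n. n \<in> N \<Longrightarrow> cinner (x - p) n = 0"
  shows "orth_proj N x = p"
proof -
  let ?q = "orth_proj N x"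
  have "p - ?q \<in> N" by (intro csubspace_diff sub pN orth_proj_in)
  then have "cinner ((x - ?q) - (x - p)) (p - ?q) = 0 - 0"
    by (subst cinner_diff_left) (simp only: orth_proj_orthogonal p_orth)
  moreover have "(x - ?q) - (x - p) = p - ?q" by simp
  ultimately have "cinner (p - ?q) (p - ?q) = 0" by simp
  then show ?thesis by (simp add: cinner_self_eq_zero)
qed

lemma orth_proj_id: "z \<in> N \<Longrightarrow> orth_proj N z = z"
  by (rule orth_proj_unique) simp_all

lemma norm_orth_proj_le: "norm (orth_proj N x) \<le> norm x"
proof -
  let ?p = "orth_proj N x"
  have "cinner ?p (x - ?p) = 0"
    using orth_proj_orthogonal[OF orth_proj_in, of x x] cinner_commute[of ?p "x - ?p"] by simp
  then have "(norm x)\<^sup>2 = (norm ?p)\<^sup>2 + (norm (x - ?p))\<^sup>2"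
    using power2_norm_add[of ?p "x - ?p"] by simp
  then show ?thesis by (simp add: power2_le_imp_le)
qed

lemma bounded_clinear_orth_proj: "bounded_clinear (orth_proj N)"
  unfolding bounded_clinear_def clinear_def
proof (intro conjI allI exI)
  show "orth_proj N (x + y) = orth_proj N x + orth_proj N y" for x y
  proof (rule orth_proj_unique)
    show "orth_proj N x + orth_proj N y \<in> N" by (intro csubspace_add sub orth_proj_in)
    fix n assume "n \<in> N"
    have split: "x + y - (orth_proj N x + orth_proj N y) = (x - orth_proj N x) + (y - orth_proj N y)"
      by simp
    show "cinner (x + y - (orth_proj N x + orth_proj N y)) n = 0"
      unfolding split by (simp add: cinner_add_left orth_proj_orthogonal[OF \<open>n \<in> N\<close>])
  qed
  show "orth_proj N (c *\<^sub>C x) = c *\<^sub>C orth_proj N x" for c x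
  proof (rule orth_proj_unique)
    show "c *\<^sub>C orth_proj N x \<in> N" by (intro csubspace_scaleC sub orth_proj_in)
    fix n assume "n \<in> N"
    then show "cinner (c *\<^sub>C x - c *\<^sub>C orth_proj N x) n = 0"
      by (simp add: scaleC_diff_right[symmetric] cinner_scaleC_left orth_proj_orthogonal)
  qed
  show "norm (orth_proj N x) \<le> norm x * 1" for x
    using norm_orth_proj_le by simp
qed

end

subsection \<open>Adjoints\<close>

lemma Riesz_representation:
  fixes g :: "'a::{complex_inner,complete_space} \<Rightarrow> complex"
  assumes g_add: "\<And>x y. g (x + y) = g x + g y"
    and g_scaleC: "\<And>c x. g (c *\<^sub>C x) = c * g x"
    and g_bounded: "\<And>x. cmod (g x) \<le> K * norm x"
  shows "\<exists>z. \<forall>x. g x = cinner z x"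
proof (cases "\<forall>x. g x = 0")
  case True
  then show ?thesis by (intro exI[of _ 0]) simp
next
  case False
  then obtain x0 where gx0: "g x0 \<noteq> 0" by blast
  have g0: "g 0 = 0" using g_add[of 0 0] by simp
  have g_diff: "g (x - y) = g x - g y" for x y
    using g_add[of x "(-1) *\<^sub>C y"] g_scaleC[of "-1" y] by (simp add: minus_eq_scaleC[symmetric])
  define ker where "ker = {x. g x = 0}"
  have sub: "csubspace ker" unfolding csubspace_def ker_def using g_add g_scaleC g0 by simp
  have "0 \<le> K"
    using g_bounded[of x0] gx0 by (smt (verit) mult_nonpos_nonneg norm_ge_zero zero_less_norm_iff)
  then have "K-lipschitz_on UNIV g"
    by (intro lipschitz_onI) (use g_bounded in \<open>simp add: dist_norm g_diff[symmetric]\<close>)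
  then have cl: "closed ker"
    unfolding ker_def by (intro closed_Collect_eq lipschitz_on_continuous_on continuous_on_const)
  \<comment> \<open>a nonzero vector orthogonal to the kernel\<close>
  define w where "w = x0 - orth_proj ker x0"
  have gw: "g w = g x0" using orth_proj_in[OF sub cl, of x0] by (simp add: w_def g_diff ker_def)
  have w_orth: "cinner w n = 0" if "g n = 0" for n
    using orth_proj_orthogonal[OF sub cl, of n x0] that by (simp add: w_def ker_def)
  have ww: "cinner w w \<noteq> 0" using gw gx0 g0 by (auto simp: cinner_self_eq_zero)
  have "g x = cinner (cnj (g w / cinner w w) *\<^sub>C w) x" for x
  proof -
    have "g (x - (g x / g w) *\<^sub>C w) = 0" using gx0 gw by (simp add: g_diff g_scaleC)
    then have "cinner w (x - (g x / g w) *\<^sub>C w) = 0" by (rule w_orth)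
    then have "cinner w x = (g x / g w) * cinner w w"
      by (simp add: cinner_diff_right cinner_scaleC_right)
    then show ?thesis using ww gx0 gw
      by (simp add: cinner_scaleC_left field_simps)
  qed
  then show ?thesis by blast
qed

lemma adjoint_exists:
  fixes T :: "'a::{complex_inner,complete_space} \<Rightarrow> 'a"
  assumes "bounded_clinear T"
  shows "\<exists>T'. \<forall>x y. cinner (T x) y = cinner x (T' y)"
proof -
  obtain K where lin: "clinear T" and bd: "\<And>x. norm (T x) \<le> norm x * K"
    using assms unfolding bounded_clinear_def by blast
  have "\<exists>z. \<forall>x. cinner y (T x) = cinner z x" for y
  proof (rule Riesz_representation)
    show "cmod (cinner y (T x)) \<le> (norm y * K) * norm x" for x
      using Cauchy_Schwarz_cinner[of y "T x"] mult_left_mono[OF bd[of x], of "norm y"]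
      by (simp add: mult_ac)
  qed (simp_all add: clinear_add[OF lin] clinear_scaleC[OF lin] cinner_add_right cinner_scaleC_right)
  then have "\<forall>y. \<exists>z. \<forall>x. cinner (T x) y = cinner x z"
    by (metis cinner_commute)
  then show ?thesis by metis
qed

lemma cinner_cadjoint:
  fixes T :: "'a::{complex_inner,complete_space} \<Rightarrow> 'a"
  assumes "bounded_clinear T"
  shows "cinner (T x) y = cinner x (cadjoint T y)"
  using someI_ex[OF adjoint_exists[OF assms]] unfolding cadjoint_def by blast

lemma positive_op_hermitian:
  assumes "positive_op A"
  shows "cinner (A x) y = cinner x (A y)"
proof -
  have lin: "clinear A" and real: "\<And>x. Im (cinner (A x) x) = 0"
    using assms by (auto simp: positive_op_def bounded_clinear_def)
  define h where "h x y = cinner (A x) y - cinner x (A y)" for x y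
  have h_diag: "h z z = 0" for z
    using real[of z] cinner_commute[of z "A z"] by (simp add: h_def complex_eq_iff)
  \<comment> \<open>polarisation: \<open>h\<close> is sesquilinear and vanishes on the diagonal\<close>
  have "h (x + y) (x + y) = h x x + h x y + h y x + h y y"
    by (simp add: h_def clinear_add[OF lin] cinner_add_left cinner_add_right algebra_simps)
  then have sum: "h x y + h y x = 0" by (simp add: h_diag)
  have "h (x + \<i> *\<^sub>C y) (x + \<i> *\<^sub>C y) = h x x + \<i> * h x y - \<i> * h y x + h y y"
    by (simp add: h_def clinear_add[OF lin] clinear_scaleC[OF lin] cinner_add_left
        cinner_add_right cinner_scaleC_left cinner_scaleC_right algebra_simps)
  then have "\<i> * (h x y - h y x) = 0" by (simp add: h_diag algebra_simps)
  with sum have "h x y = 0" by (simp add: algebra_simps)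
  then show ?thesis by (simp add: h_def)
qed

subsection \<open>Compatibility and \<open>A\<close>-projections\<close>

lemma A_pythagoras:
  fixes A :: "'a::complex_inner \<Rightarrow> 'a"
  assumes lin: "clinear A" and herm: "\<And>x y. cinner (A x) y = cinner x (A y)"
    and orth: "cinner (A u) v = 0"
  shows "Re (cinner (A (u + v)) (u + v)) = Re (cinner (A u) u) + Re (cinner (A v) v)"
proof -
  have "cinner (A v) u = 0"
    using orth herm[of v u] cinner_commute[of v "A u"] by simp
  then show ?thesis
    using orth by (simp add: clinear_add[OF lin] cinner_add_left cinner_add_right)
qed

lemma compatible_projection_is_A_projection:
  fixes A :: "'a::{complex_inner,complete_space} \<Rightarrow> 'a"
  assumes pos: "positive_op A" and bQ: "bounded_clinear Q" and idem: "Q \<circ> Q = Q"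
    and range: "range Q = S" and comm: "A \<circ> Q = cadjoint Q \<circ> A"
  shows "A_projection A S Q"
proof -
  have linA: "clinear A" and linQ: "clinear Q"
    using pos bQ by (simp_all add: positive_op_def bounded_clinear_def)
  have QQ: "Q (Q x) = Q x" for x using idem by (metis comp_apply)
  have residual_orth: "cinner (A (y - Q y)) (Q w) = 0" for y w
  proof -
    have "cinner (Q w) (A (y - Q y)) = cinner w (A (Q (y - Q y)))"
      using cinner_cadjoint[OF bQ] comm by (metis comp_apply)
    also have "\<dots> = 0" by (simp add: clinear_diff[OF linQ] QQ clinear_zero[OF linA])
    finally show ?thesis by (subst cinner_commute) simp
  qed
  have "A_norm A (y - Q y) \<le> A_norm A (y - s)" if "s \<in> S" for y s
  proof -
    obtain t where s: "s = Q t" using \<open>s \<in> S\<close> range by blast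
    have split: "y - s = (y - Q y) + Q (y - t)" by (simp add: s clinear_diff[OF linQ])
    have "Re (cinner (A (y - s)) (y - s))
        = Re (cinner (A (y - Q y)) (y - Q y)) + Re (cinner (A (Q (y - t))) (Q (y - t)))"
      unfolding split by (rule A_pythagoras[OF linA positive_op_hermitian[OF pos] residual_orth])
    moreover have "0 \<le> Re (cinner (A (Q (y - t))) (Q (y - t)))"
      using pos by (simp add: positive_op_def)
    ultimately show ?thesis by (simp add: A_norm_def)
  qed
  with bQ range show ?thesis by (auto simp: A_projection_def)
qed

lemma A_projection_residual_orthogonal:
  fixes A :: "'a::{complex_inner,complete_space} \<Rightarrow> 'a"
  assumes pos: "positive_op A" and sub: "csubspace S" and T: "A_projection A S T"
    and "s \<in> S"
  shows "cinner (A s) (y - T y) = 0"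
proof -
  have herm: "\<And>x y. cinner (A x) y = cinner x (A y)" by (rule positive_op_hermitian[OF pos])
  have "cinner (A (y - T y)) s = 0"
  proof (rule hermitian_form_min_orthogonal[where F = "\<lambda>a b. cinner (A a) b"])
    fix c
    have "T y + c *\<^sub>C s \<in> S"
      using T \<open>s \<in> S\<close> by (auto simp: A_projection_def intro: csubspace_add csubspace_scaleC sub)
    then have "A_norm A (y - T y) \<le> A_norm A ((y - T y) - c *\<^sub>C s)"
      using T by (simp add: A_projection_def diff_diff_eq)
    then show "Re (cinner (A (y - T y)) (y - T y))
        \<le> Re (cinner (A (y - T y - c *\<^sub>C s)) (y - T y - c *\<^sub>C s))"
      using pos by (simp add: A_norm_def positive_op_def)
    show "cinner (A a) b = cnj (cinner (A b) a)" for a b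
      by (metis herm cinner_commute)
    show "0 \<le> Re (cinner (A a) a)" for a
      using pos by (simp add: positive_op_def)
  qed (simp_all add: cinner_add_right cinner_scaleC_right)
  then show ?thesis
    using herm[of s "y - T y"] cinner_commute[of s] by simp
qed

text \<open>\<open>AQ = Q\<^sup>*A\<close> says that \<open>Q\<close> is symmetric for \<open>\<langle>A\<cdot>,\<cdot>\<rangle>\<close>; both \<open>\<langle>AQx, z\<rangle>\<close> and
\<open>\<langle>Ax, Qz\<rangle>\<close> reduce to \<open>\<langle>AQx, Qz\<rangle>\<close> once \<open>range (I - Q)\<close> is \<open>A\<close>-orthogonal to \<open>range Q\<close>.\<close>

lemma comp_eq_cadjoint_comp_if_A_orthogonal:
  fixes A Q :: "'a::{complex_inner,complete_space} \<Rightarrow> 'a"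
  assumes bQ: "bounded_clinear Q" and lin: "clinear A"
    and herm: "\<And>x y. cinner (A x) y = cinner x (A y)"
    and orth: "\<And>x z. cinner (A (Q x)) (z - Q z) = 0"
  shows "A \<circ> Q = cadjoint Q \<circ> A"
proof
  fix z
  have "cinner x (A (Q z)) = cinner x (cadjoint Q (A z))" for x
  proof -
    have "cinner (A (x - Q x)) (Q z) = 0"
      using orth[of z x] herm[of "Q z"] herm[of "x - Q x"] cinner_commute[of "Q z"] by simp
    then have "cinner x (A (Q z)) = cinner (A (Q x)) (Q z)"
      using herm[of x "Q z"] by (simp add: clinear_diff[OF lin] cinner_diff_left)
    also have "\<dots> = cinner (A (Q x)) z"
      using orth[of x z] by (simp add: cinner_diff_right)
    also have "\<dots> = cinner x (cadjoint Q (A z))"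
      by (simp add: herm cinner_cadjoint[OF bQ])
    finally show ?thesis .
  qed
  then show "(A \<circ> Q) z = (cadjoint Q \<circ> A) z"
    by (simp add: cinner_right_eqI)
qed

lemma closed_csubspace_A_orthogonal:
  assumes "closed_csubspace S"
  shows "closed_csubspace {x \<in> S. \<forall>s\<in>S. cinner (A s) x = 0}"
proof -
  have "{x \<in> S. \<forall>s\<in>S. cinner (A s) x = 0} = S \<inter> (\<Inter>s\<in>S. {x. cinner (A s) x = 0})"
    by auto
  then show ?thesis
    using assms unfolding closed_csubspace_def csubspace_def
    by (simp add: cinner_add_right cinner_scaleC_right closed_Int closed_INT closed_orthogonal)
qed

lemma A_projection_idempotent_correction:
  fixes A :: "'a::{complex_inner,complete_space} \<Rightarrow> 'a"
  assumes pos: "positive_op A" and S: "closed_csubspace S" and T: "A_projection A S T"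
  obtains Q where "bounded_clinear Q" and "\<And>x. Q x \<in> S" and "\<And>s. s \<in> S \<Longrightarrow> Q s = s"
    and "\<And>x z. cinner (A (Q x)) (z - Q z) = 0"
proof -
  have sub: "csubspace S" using S by (simp add: closed_csubspace_def)
  have bT: "bounded_clinear T" and TS: "T x \<in> S" for x
    using T by (auto simp: A_projection_def)
  have residual: "cinner (A s) (y - T y) = 0" if "s \<in> S" for s y
    by (rule A_projection_residual_orthogonal[OF pos sub T that])
  define N where "N = {x \<in> S. \<forall>s\<in>S. cinner (A s) x = 0}"
  have subN: "csubspace N" and clN: "closed N"
    using closed_csubspace_A_orthogonal[OF S] by (simp_all add: N_def closed_csubspace_def)
  define P where "P = orth_proj N"
  have PN: "P x \<in> N" for x unfolding P_def by (rule orth_proj_in[OF subN clN])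
  define Q where "Q x = T x + P (x - T x)" for x
  have "bounded_clinear (\<lambda>x. P (x - T x))"
    using bounded_clinear_compose[OF bounded_clinear_orth_proj[OF subN clN]
        bounded_clinear_diff[OF bounded_clinear_ident bT]]
    by (simp add: P_def)
  then have bQ: "bounded_clinear Q"
    unfolding Q_def by (rule bounded_clinear_add[OF bT])
  have PS: "P x \<in> S" for x using PN[of x] by (simp add: N_def)
  have QS: "Q x \<in> S" for x
    unfolding Q_def by (rule csubspace_add[OF sub TS PS])
  have Q_id: "Q s = s" if "s \<in> S" for s
  proof -
    have "s - T s \<in> N" unfolding N_def using csubspace_diff[OF sub that TS] residual by auto
    then show ?thesis by (simp add: Q_def P_def orth_proj_id[OF subN clN])
  qed
  have A_orth: "cinner (A (Q x)) (z - Q z) = 0" for x z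
  proof -
    have P_orth: "cinner (A (Q x)) (P (z - T z)) = 0"
      using PN[of "z - T z"] QS[of x] by (simp add: N_def)
    have "z - Q z = (z - T z) - P (z - T z)" by (simp add: Q_def)
    then show ?thesis
      by (simp only: cinner_diff_right[of _ "z - T z"] residual[OF QS] P_orth) simp
  qed
  from bQ QS Q_id A_orth show ?thesis by (rule that)
qed

lemma A_projection_imp_compatible:
  fixes A :: "'a::{complex_inner,complete_space} \<Rightarrow> 'a"
  assumes pos: "positive_op A" and S: "closed_csubspace S" and T: "A_projection A S T"
  shows "compatible A S"
proof -
  obtain Q where bQ: "bounded_clinear Q" and QS: "\<And>x. Q x \<in> S" and Q_id: "\<And>s. s \<in> S \<Longrightarrow> Q s = s"
    and A_orth: "\<And>x z. cinner (A (Q x)) (z - Q z) = 0"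
    using A_projection_idempotent_correction[OF pos S T] by blast
  have "Q \<circ> Q = Q" by (rule ext) (simp add: QS Q_id)
  moreover have "range Q = S" using QS Q_id by (auto intro: image_eqI[of _ Q, OF sym])
  moreover have "A \<circ> Q = cadjoint Q \<circ> A"
    using pos by (intro comp_eq_cadjoint_comp_if_A_orthogonal bQ A_orth positive_op_hermitian)
      (simp add: positive_op_def bounded_clinear_def)
  ultimately show ?thesis using bQ by (auto simp: compatible_def)
qed

theorem mainTheorem6:
  fixes A :: "'a::{complex_inner, complete_space} \<Rightarrow> 'a" and S :: "'a set"
  assumes "separable_space (euclidean :: 'a topology)"
    and "positive_op A"
    and "closed_csubspace S"
  shows "compatible A S \<longleftrightarrow> (\<exists>T. A_projection A S T)"
proof
  assume "compatible A S"
  then show "\<exists>T. A_projection A S T"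
    using compatible_projection_is_A_projection[OF assms(2)] by (auto simp: compatible_def)
next
  assume "\<exists>T. A_projection A S T"
  then show "compatible A S"
    using A_projection_imp_compatible[OF assms(2,3)] by blast
qed

end
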